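(* Let $\mathbb{X},\mathbb{Y}$ be real Banach spaces and let $T:\mathbb{X}\to\mathbb{Y}$ be a bounded linear operator that preserves Birkhoff–James orthogonality at a point $x\in\mathbb{X}$. If $Tx$ is a smooth point of $\mathbb{Y}$, then $x$ is a smooth point of $\mathbb{X}$.
   Context: All spaces are real Banach spaces. For $u,v\in\mathbb{X}$, $u$ is Birkhoff–James orthogonal to $v$, written $u\perp_B v$, if $\|u+\lambda v\|\ge\|u\|$ for all $\lambda\in\mathbb{R}$. A bounded linear operator $T$ preserves Birkhoff–James orthogonality at $x$ if for all $v\in\mathbb{X}$, $x\perp_B v$ implies $Tx\perp_B Tv$. For non-zero $z$, $J(z)=\{f\in\mathbb{X}^*:\|f\|=1,\ f(z)=\|z\|\}$; a non-zero $z$ is smooth if $J(z)$ is a singleton (equivalently $\dim\operatorname{span}J(z)=1$). *)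

theory Defs
  imports "HOL-Analysis.Analysis"
begin

definition bj_orth :: "'a::real_normed_vector \<Rightarrow> 'a \<Rightarrow> bool" where
  "bj_orth u v \<longleftrightarrow> (\<forall>t::real. norm (u + t *\<^sub>R v) \<ge> norm u)"

definition preserves_bj_at :: "('a::real_normed_vector \<Rightarrow> 'b::real_normed_vector) \<Rightarrow> 'a \<Rightarrow> bool" where
  "preserves_bj_at T x \<longleftrightarrow> (\<forall>v. bj_orth x v \<longrightarrow> bj_orth (T x) (T v))"

definition norming_functionals :: "'a::real_normed_vector \<Rightarrow> ('a \<Rightarrow> real) set" where
  "norming_functionals z = {f. bounded_linear f \<and> onorm f = 1 \<and> f z = norm z}"

definition smooth_point :: "'a::real_normed_vector \<Rightarrow> bool" where
  "smooth_point z \<longleftrightarrow> z \<noteq> 0 \<and> (\<exists>f. norming_functionals z = {f})"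

end

theory Submission
  imports Defs
begin

text \<open>If \<open>f \<in> J(x)\<close>, every \<open>u\<close> in the kernel of \<open>f\<close> is Birkhoff--James orthogonal to \<open>x\<close>,
  so \<open>T u\<close> is orthogonal to \<open>T x\<close>. By Hahn--Banach some norming functional at \<open>T x\<close> vanishes
  at \<open>T u\<close>; as \<open>T x\<close> is smooth, this is the unique \<open>g \<in> J(T x)\<close>. Hence \<open>ker f \<subseteq> ker (g \<circ> T)\<close>,
  which forces \<open>f = (norm x / norm (T x)) (g \<circ> T)\<close>, a functional independent of \<open>f\<close>.\<close>

text \<open>A partial linear functional of norm at most 1 is represented by its graph: a linear
  subspace of \<open>X \<times> \<real>\<close> dominated by the norm.\<close>
definition dominated_graph :: "('a::real_normed_vector \<times> real) set \<Rightarrow> bool" where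
  "dominated_graph G \<longleftrightarrow> (\<forall>(v, r) \<in> G. r \<le> norm v)"

lemma dominated_graphD: "dominated_graph G \<Longrightarrow> (v, r) \<in> G \<Longrightarrow> r \<le> norm v"
  unfolding dominated_graph_def by blast

lemma dominated_subspace_graph_unique:
  assumes "subspace G" "dominated_graph G" "(v, r) \<in> G" "(v, s) \<in> G"
  shows "r = s"
proof -
  have "(0, r - s) \<in> G" "(0, s - r) \<in> G"
    using subspace_diff[OF assms(1)] assms(3,4) by (metis diff_Pair diff_self)+
  then have "r - s \<le> 0" "s - r \<le> 0"
    using dominated_graphD[OF assms(2)] by force+
  then show ?thesis by simp
qed

lemma dominated_graph_separating_constant:
  fixes v :: "'a::real_normed_vector"
  assumes G: "subspace G" "dominated_graph G"
  shows "\<exists>c. (\<forall>(w, s) \<in> G. s - norm (w - v) \<le> c) \<and> (\<forall>(u, r) \<in> G. c \<le> norm (u + v) - r)"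
proof -
  define S where "S = {s - norm (w - v) | w s. (w, s) \<in> G}"
  have bound: "s - norm (w - v) \<le> norm (u + v) - r" if "(u, r) \<in> G" "(w, s) \<in> G" for u r w s
  proof -
    have "r + s \<le> norm (u + w)"
      using dominated_graphD[OF G(2)] subspace_add[OF G(1) that] by simp
    also have "\<dots> \<le> norm (u + v) + norm (w - v)"
      using norm_triangle_ineq[of "u + v" "w - v"] by (simp add: algebra_simps)
    finally show ?thesis by simp
  qed
  have "(0, 0) \<in> G"
    using subspace_0[OF G(1)] by (simp add: zero_prod_def)
  then have "S \<noteq> {}" and "bdd_above S"
    unfolding S_def bdd_above_def using bound by blast+
  then have "\<forall>(w, s) \<in> G. s - norm (w - v) \<le> Sup S" "\<forall>(u, r) \<in> G. Sup S \<le> norm (u + v) - r"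
    using bound by (auto simp: S_def intro!: cSup_upper cSup_least)
  then show ?thesis by blast
qed

lemma dominated_graph_extension_constant:
  fixes v :: "'a::real_normed_vector"
  assumes G: "subspace G" "dominated_graph G"
  shows "\<exists>c. \<forall>(u, r) \<in> G. \<forall>t. r + t * c \<le> norm (u + t *\<^sub>R v)"
proof -
  obtain c where below: "\<And>w s. (w, s) \<in> G \<Longrightarrow> s - norm (w - v) \<le> c"
    and above: "\<And>u r. (u, r) \<in> G \<Longrightarrow> c \<le> norm (u + v) - r"
    using dominated_graph_separating_constant[OF G, of v] by blast
  have "r + t * c \<le> norm (u + t *\<^sub>R v)" if ur: "(u, r) \<in> G" for u r t
  proof -
    consider "t = 0" | "t \<noteq> 0" by blast
    then show ?thesis
    proof cases
      case 1
      then show ?thesis using dominated_graphD[OF G(2) ur] by simp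
    next
      case 2
      define w where "w = u /\<^sub>R t"
      have "(w, r / t) \<in> G" "(- w, - (r / t)) \<in> G"
        using subspace_scale[OF G(1) ur, of "1 / t"] subspace_scale[OF G(1) ur, of "- 1 / t"]
        by (simp_all add: w_def divide_inverse mult.commute)
      have u: "u + t *\<^sub>R v = t *\<^sub>R (w + v)"
        using 2 by (simp add: w_def scaleR_add_right)
      show ?thesis
      proof (cases "t > 0")
        case True
        have "t * c \<le> t * (norm (w + v) - r / t)"
          using above[OF \<open>(w, r / t) \<in> G\<close>] True by (simp add: mult_left_mono)
        then show ?thesis
          using True by (simp add: u right_diff_distrib)
      next
        case False
        have "- (r / t) - norm (w + v) \<le> c"
          using below[OF \<open>(- w, - (r / t)) \<in> G\<close>] by (simp add: norm_minus_commute add.commute)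
        then have "t * c \<le> t * (- (r / t) - norm (w + v))"
          using False by (simp add: mult_left_mono_neg)
        then show ?thesis
          using False 2 by (simp add: u right_diff_distrib)
      qed
    qed
  qed
  then show ?thesis by blast
qed

lemma dominated_graph_extend:
  assumes G: "subspace G" "dominated_graph G" and v: "v \<notin> fst ` G"
  shows "\<exists>G'. subspace G' \<and> dominated_graph G' \<and> G \<subset> G'"
proof -
  obtain c where c: "\<And>u r t. (u, r) \<in> G \<Longrightarrow> r + t * c \<le> norm (u + t *\<^sub>R v)"
    using dominated_graph_extension_constant[OF G] by blast
  define G' where "G' = span (insert (v, c) G)"
  have "span G = G"
    using G(1) by simp
  have "dominated_graph G'"
    unfolding dominated_graph_def
  proof safe
    fix x y assume "(x, y) \<in> G'"
    then obtain k where "(x - k *\<^sub>R v, y - k * c) \<in> G"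
      using \<open>span G = G\<close> by (auto simp: G'_def span_breakdown_eq)
    from c[OF this, of k] show "y \<le> norm x" by simp
  qed
  moreover have "G \<subseteq> G'"
    unfolding G'_def by (meson span_superset subset_insertI subset_trans)
  moreover have "(v, c) \<in> G'" "(v, c) \<notin> G"
    using v by (force simp: G'_def span_base)+
  ultimately show ?thesis
    unfolding G'_def by blast
qed

lemma subspace_Union_chain:
  assumes "C \<noteq> {}" "chain\<^sub>\<subseteq> C" "\<And>S. S \<in> C \<Longrightarrow> subspace S"
  shows "subspace (\<Union>C)"
  unfolding subspace_def
proof (intro conjI ballI allI)
  show "0 \<in> \<Union>C"
    using assms(1,3) subspace_0 by blast
next
  fix p q assume "p \<in> \<Union>C" "q \<in> \<Union>C"
  then obtain S S' where "S \<in> C" "S' \<in> C" "p \<in> S" "q \<in> S'" by blast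
  with assms(2,3) show "p + q \<in> \<Union>C"
    unfolding chain_subset_def by (metis UnionI subsetD subspace_add)
next
  fix a p assume "p \<in> \<Union>C"
  with assms(3) show "a *\<^sub>R p \<in> \<Union>C"
    by (meson UnionE UnionI subspace_scale)
qed

lemma exists_total_dominated_graph:
  assumes "subspace G0" "dominated_graph G0"
  shows "\<exists>M. G0 \<subseteq> M \<and> subspace M \<and> dominated_graph M \<and> fst ` M = UNIV"
proof -
  define A where "A = {G. G0 \<subseteq> G \<and> subspace G \<and> dominated_graph G}"
  have "\<Union>C \<in> A" if "C \<noteq> {}" "subset.chain A C" for C
  proof -
    have "chain\<^sub>\<subseteq> C" "\<And>S. S \<in> C \<Longrightarrow> S \<in> A"
      using that(2) by (auto simp: subset.chain_def chain_subset_def)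
    then show ?thesis
      using that(1) subspace_Union_chain[of C]
      by (auto simp: A_def dominated_graph_def)
  qed
  moreover have "A \<noteq> {}"
    using assms A_def by blast
  ultimately obtain M where "M \<in> A" and max: "\<And>X. X \<in> A \<Longrightarrow> M \<subseteq> X \<Longrightarrow> X = M"
    using subset_Zorn_nonempty[of A] by blast
  then have M: "G0 \<subseteq> M" "subspace M" "dominated_graph M"
    unfolding A_def by simp_all
  have "fst ` M = UNIV"
  proof (rule ccontr)
    assume "fst ` M \<noteq> UNIV"
    then obtain v where "v \<notin> fst ` M" by blast
    then obtain G' where G': "subspace G'" "dominated_graph G'" "M \<subset> G'"
      using dominated_graph_extend[OF M(2,3)] by blast
    then have "G' \<in> A"
      using M(1) unfolding A_def by blast
    with max G'(3) show False
      by blast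
  qed
  with M show ?thesis
    by blast
qed

theorem hahn_banach_dominated_graph:
  fixes G0 :: "('a::real_normed_vector \<times> real) set"
  assumes "subspace G0" "dominated_graph G0"
  shows "\<exists>F. bounded_linear F \<and> (\<forall>v. \<bar>F v\<bar> \<le> norm v) \<and> (\<forall>(v, r) \<in> G0. F v = r)"
proof -
  obtain M where M: "G0 \<subseteq> M" "subspace M" "dominated_graph M" "fst ` M = UNIV"
    using exists_total_dominated_graph[OF assms] by blast
  define F where "F v = (THE r. (v, r) \<in> M)" for v
  have graph: "(v, r) \<in> M \<longleftrightarrow> F v = r" for v r
  proof -
    obtain s where "(v, s) \<in> M"
      using M(4) by (metis UNIV_I imageE prod.collapse)
    moreover have "F v = s"
      unfolding F_def using dominated_subspace_graph_unique[OF M(2,3)] calculation by blast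
    ultimately show ?thesis
      using dominated_subspace_graph_unique[OF M(2,3)] by blast
  qed
  have FM: "(v, F v) \<in> M" for v
    using graph by blast
  have add: "F (u + w) = F u + F w" for u w
    using graph subspace_add[OF M(2) FM FM] by simp
  have scale: "F (a *\<^sub>R u) = a * F u" for a u
    using graph subspace_scale[OF M(2) FM, of a] by simp
  have le: "F v \<le> norm v" for v
    using dominated_graphD[OF M(3) FM] .
  have abs_le: "\<bar>F v\<bar> \<le> norm v" for v
    using le[of v] le[of "- v"] scale[of "- 1" v] by simp
  have "bounded_linear F"
    by (rule bounded_linear_intro[of _ 1]) (simp_all add: add scale abs_le)
  moreover have "\<forall>(v, r) \<in> G0. F v = r"
    using graph M(1) by blast
  ultimately show ?thesis
    using abs_le by blast
qed

lemma norming_functionalsI: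
  assumes "bounded_linear f" "\<And>v. \<bar>f v\<bar> \<le> norm v" "f x = norm x" "x \<noteq> 0"
  shows "f \<in> norming_functionals x"
proof -
  have "onorm f \<le> 1"
    using assms(2) by (intro onorm_bound) simp_all
  moreover have "1 \<le> onorm f"
    using le_onorm[OF assms(1), of x] assms(3,4) by simp
  ultimately show ?thesis
    unfolding norming_functionals_def using assms(1,3) by simp
qed

lemma bj_orth_zero [simp]: "bj_orth x 0"
  unfolding bj_orth_def by simp

lemma bj_orth_scaled_norm_le:
  assumes "bj_orth x w"
  shows "\<bar>a\<bar> * norm x \<le> norm (a *\<^sub>R x + b *\<^sub>R w)"
proof (cases "a = 0")
  case False
  have "a *\<^sub>R x + b *\<^sub>R w = a *\<^sub>R (x + (b / a) *\<^sub>R w)"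
    using False by (simp add: scaleR_add_right)
  moreover have "norm x \<le> norm (x + (b / a) *\<^sub>R w)"
    using assms unfolding bj_orth_def by blast
  ultimately show ?thesis
    by (simp add: mult_left_mono)
qed simp

lemma bj_orth_imp_norming_functional_vanishing:
  fixes x w :: "'a::real_normed_vector"
  assumes "x \<noteq> 0" "bj_orth x w"
  shows "\<exists>f \<in> norming_functionals x. f w = 0"
proof -
  define G0 where "G0 = span {(x, norm x), (w, 0)}"
  have G0_elem: "\<exists>a b. p = (a *\<^sub>R x + b *\<^sub>R w, a * norm x)" if "p \<in> G0" for p
  proof -
    have "\<exists>a. p - a *\<^sub>R (x, norm x) \<in> span {(w, 0)}"
      using that by (simp only: G0_def span_breakdown_eq[of p "(x, norm x)"])
    then obtain a where "p - a *\<^sub>R (x, norm x) \<in> span {(w, 0)}" ..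
    then obtain b where "p - a *\<^sub>R (x, norm x) = b *\<^sub>R (w, 0)"
      by (auto simp: span_singleton)
    then have "p = (a *\<^sub>R x + b *\<^sub>R w, a * norm x)"
      by (cases p) (simp add: diff_eq_eq add.commute)
    then show ?thesis by blast
  qed
  have "dominated_graph G0"
    unfolding dominated_graph_def
  proof safe
    fix v r assume "(v, r) \<in> G0"
    then obtain a b where v: "v = a *\<^sub>R x + b *\<^sub>R w" and r: "r = a * norm x"
      using G0_elem by blast
    have "a * norm x \<le> \<bar>a\<bar> * norm x"
      by (simp add: mult_right_mono)
    then show "r \<le> norm v"
      using bj_orth_scaled_norm_le[OF assms(2), of a b] unfolding v r by linarith
  qed
  moreover have "subspace G0"
    by (simp add: G0_def)
  ultimately obtain f where f: "bounded_linear f" "\<And>v. \<bar>f v\<bar> \<le> norm v"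
    and on_G0: "\<forall>(v, r) \<in> G0. f v = r"
    using hahn_banach_dominated_graph by blast
  have "(x, norm x) \<in> G0" "(w, 0) \<in> G0"
    by (simp_all add: G0_def span_base)
  then have "f x = norm x" "f w = 0"
    using on_G0 by auto
  with f assms(1) show ?thesis
    using norming_functionalsI by blast
qed

lemma norming_functional_kernel_bj_orth:
  assumes "f \<in> norming_functionals x" "f u = 0"
  shows "bj_orth x u"
  unfolding bj_orth_def
proof
  fix t :: real
  have f: "bounded_linear f" "onorm f = 1" "f x = norm x"
    using assms(1) unfolding norming_functionals_def by auto
  interpret f: bounded_linear f by (rule f(1))
  have "f (x + t *\<^sub>R u) \<le> norm (x + t *\<^sub>R u)"
    using onorm[OF f(1), of "x + t *\<^sub>R u"] f(2) by simp
  then show "norm x \<le> norm (x + t *\<^sub>R u)"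
    using f(3) assms(2) by (simp add: f.add f.scaleR)
qed

lemma unique_norming_functional_vanishes_on_bj_orth:
  assumes "z \<noteq> 0" "norming_functionals z = {g}" "bj_orth z w"
  shows "g w = 0"
  using bj_orth_imp_norming_functional_vanishing[OF assms(1,3)] assms(2) by auto

lemma preserves_bj_norming_functional_eq:
  assumes T: "bounded_linear T" "preserves_bj_at T x"
    and Tx: "T x \<noteq> 0" "norming_functionals (T x) = {g}"
    and f: "f \<in> norming_functionals x"
  shows "f v = norm x / norm (T x) * g (T v)"
proof -
  interpret T: bounded_linear T by (rule T(1))
  have "g \<in> norming_functionals (T x)"
    using Tx(2) by simp
  then have g: "bounded_linear g" "g (T x) = norm (T x)"
    unfolding norming_functionals_def by auto
  interpret g: bounded_linear g by (rule g(1))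
  interpret f: bounded_linear f
    using f unfolding norming_functionals_def by simp
  have x: "x \<noteq> 0" "f x = norm x"
    using Tx(1) T.zero f unfolding norming_functionals_def by auto
  define u where "u = v - (f v / norm x) *\<^sub>R x"
  have "f u = 0"
    using x unfolding u_def by (simp add: f.diff f.scaleR)
  then have "bj_orth (T x) (T u)"
    using norming_functional_kernel_bj_orth[OF f] T(2) unfolding preserves_bj_at_def by blast
  then have "g (T u) = 0"
    using unique_norming_functional_vanishes_on_bj_orth[OF Tx] by blast
  then have "g (T v) = f v / norm x * norm (T x)"
    unfolding u_def by (simp add: T.diff T.scaleR g.diff g.scaleR g(2))
  then show ?thesis
    using x Tx(1) by (simp add: field_simps)
qed

theorem mainTheorem1:
  fixes T :: "'a::banach \<Rightarrow> 'b::banach" and x :: 'a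
  assumes "bounded_linear T"
    and "preserves_bj_at T x"
    and "smooth_point (T x)"
  shows "smooth_point x"
proof -
  obtain g where Tx: "T x \<noteq> 0" "norming_functionals (T x) = {g}"
    using assms(3) unfolding smooth_point_def by blast
  have x: "x \<noteq> 0"
    using Tx(1) linear_0[OF bounded_linear.linear[OF assms(1)]] by auto
  obtain f0 where f0: "f0 \<in> norming_functionals x"
    using bj_orth_imp_norming_functional_vanishing[OF x bj_orth_zero] by blast
  have "f = f0" if "f \<in> norming_functionals x" for f
    using preserves_bj_norming_functional_eq[OF assms(1,2) Tx that]
      preserves_bj_norming_functional_eq[OF assms(1,2) Tx f0] by (intro ext) simp
  with f0 have "norming_functionals x = {f0}"
    by blast
  with x show ?thesis
    unfolding smooth_point_def by blast
qed

end
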